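(* Let $\Omega$ be a domain in $\mathbb{C}$. (1) If $\Omega$ satisfies $(\Delta)_{1,\alpha}$ for some $\alpha>1$, then there exists $\alpha'>\alpha$ such that $\partial\Omega$ satisfies $(U)_{1,\alpha'}$. (2) If $\Omega$ satisfies $(\Delta)_{2,\beta}$ for some $\beta>0$, then there exists $\beta'>\beta$ such that $\partial\Omega$ satisfies $(U)_{2,\beta'}$.
   Context: For $a\in\partial\Omega$ and $r>0$, $w_{a,r}$ denotes the harmonic measure of $\Omega\cap\partial D(a,r)$ relative to $\Omega\cap D(a,r)$. For an increasing function $h$, $\Omega$ satisfies $(\Delta)_h$ if there exist $\varepsilon\in(0,1)$ and $r_0>0$ such that $w_{a,r}(z)\le1-\varepsilon$ for every $a\in\partial\Omega$, $r\in(0,r_0)$ and $z\in\Omega\cap\partial D(a,h(r))$. With $h_{1,\alpha}(t)=t^\alpha$ ($\alpha>1$) and $h_{2,\beta}(t)=t(\log\frac1t)^{-\beta}$ ($\beta>0$), $\Omega$ satisfies $(\Delta)_{1,\alpha}$ (resp. $(\Delta)_{2,\beta}$) if there is $C>0$ such that $\Omega$ satisfies $(\Delta)_{Ch_{1,\alpha}}$ (resp. $(\Delta)_{Ch_{2,\beta}}$). For an increasing function $h$ on $[0,r_0)$ with $h(r)\le r$, a closed set $K\subset\mathbb{C}$ is $h$-uniformly perfect if $\{z: h(r)\le|z-a|\le r\}\cap K\neq\emptyset$ for every $a\in K$ and $r\in(0,r_0)$; a closed set satisfies $(U)_{1,\alpha}$ (resp. $(U)_{2,\beta}$) if there exist $C>0$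 and $r_0>0$ such that it is $Ch_{1,\alpha}$-uniformly perfect (resp. $Ch_{2,\beta}$-uniformly perfect) with that $r_0$. *)

theory Defs
  imports "HOL-Analysis.Analysis"
begin

text \<open>Superharmonic functions (real valued; lower semicontinuous with the
  super-mean-value property on circles whose closed disc lies in G).\<close>
definition superharmonic_on :: "complex set \<Rightarrow> (complex \<Rightarrow> real) \<Rightarrow> bool" where
  "superharmonic_on G u \<longleftrightarrow>
     (\<forall>z\<in>G. \<forall>e>0. \<forall>\<^sub>F w in at z within G. u z - e < u w) \<and>
     (\<forall>z \<rho>. 0 < \<rho> \<and> cball z \<rho> \<subseteq> G \<longrightarrow>
        (\<lambda>t. u (z + of_real \<rho> * cis t)) integrable_on {0..2*pi} \<and>
        integral {0..2*pi} (\<lambda>t. u (z + of_real \<rho> * cis t)) / (2*pi) \<le> u z)"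

text \<open>Harmonic measure of E relative to G at z: the upper Perron solution of
  the Dirichlet problem on G with boundary data the indicator of E.\<close>
definition harmonic_measure :: "complex set \<Rightarrow> complex set \<Rightarrow> complex \<Rightarrow> real" where
  "harmonic_measure G E z = Inf {u z | u. superharmonic_on G u \<and> (\<forall>w. 0 \<le> u w \<and> u w \<le> 1) \<and>
       (\<forall>\<zeta>\<in>frontier G. \<forall>e>0. \<forall>\<^sub>F w in at \<zeta> within G. indicator E \<zeta> - e \<le> u w)}"

definition w_ar :: "complex set \<Rightarrow> complex \<Rightarrow> real \<Rightarrow> complex \<Rightarrow> real" where
  "w_ar \<Omega> a r = harmonic_measure (\<Omega> \<inter> ball a r) (\<Omega> \<inter> sphere a r)"

definition Delta_cond :: "(real \<Rightarrow> real) \<Rightarrow> complex set \<Rightarrow> bool" where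
  "Delta_cond h \<Omega> \<longleftrightarrow> (\<exists>\<epsilon>. 0 < \<epsilon> \<and> \<epsilon> < 1 \<and> (\<exists>r0>0. \<forall>a\<in>frontier \<Omega>. \<forall>r. 0 < r \<and> r < r0 \<longrightarrow>
      (\<forall>z\<in>\<Omega> \<inter> sphere a (h r). w_ar \<Omega> a r z \<le> 1 - \<epsilon>)))"

definition h1 :: "real \<Rightarrow> real \<Rightarrow> real" where
  "h1 \<alpha> t = t powr \<alpha>"

definition h2 :: "real \<Rightarrow> real \<Rightarrow> real" where
  "h2 \<beta> t = t * (ln (1 / t)) powr (- \<beta>)"

definition Delta1 :: "real \<Rightarrow> complex set \<Rightarrow> bool" where
  "Delta1 \<alpha> \<Omega> \<longleftrightarrow> (\<exists>C>0. Delta_cond (\<lambda>t. C * h1 \<alpha> t) \<Omega>)"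

definition Delta2 :: "real \<Rightarrow> complex set \<Rightarrow> bool" where
  "Delta2 \<beta> \<Omega> \<longleftrightarrow> (\<exists>C>0. Delta_cond (\<lambda>t. C * h2 \<beta> t) \<Omega>)"

definition unif_perfect :: "(real \<Rightarrow> real) \<Rightarrow> real \<Rightarrow> complex set \<Rightarrow> bool" where
  "unif_perfect h r0 K \<longleftrightarrow> closed K \<and> mono_on {0..<r0} h \<and> (\<forall>r\<in>{0..<r0}. h r \<le> r) \<and>
     (\<forall>a\<in>K. \<forall>r. 0 < r \<and> r < r0 \<longrightarrow> (\<exists>z\<in>K. h r \<le> dist z a \<and> dist z a \<le> r))"

definition U1 :: "real \<Rightarrow> complex set \<Rightarrow> bool" where
  "U1 \<alpha> K \<longleftrightarrow> (\<exists>C>0. \<exists>r0>0. unif_perfect (\<lambda>t. C * h1 \<alpha> t) r0 K)"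

definition U2 :: "real \<Rightarrow> complex set \<Rightarrow> bool" where
  "U2 \<beta> K \<longleftrightarrow> (\<exists>C>0. \<exists>r0>0. unif_perfect (\<lambda>t. C * h2 \<beta> t) r0 K)"

end

theory Submission
  imports Defs "HOL-Complex_Analysis.Complex_Analysis"
begin

(* Let a be a boundary point and suppose the closed annulus rho <= |z - a| <= r contains no
   boundary point. Since Omega is connected and not contained in the disc, the annulus
   rho < |z - a| <= r then lies in Omega, and the minimum principle, applied to an admissible
   superharmonic majorant minus the harmonic function log(|z - a|/rho)/log(r/rho), gives
   w_{a,r}(z) >= log(h(r)/rho)/log(r/rho) on |z - a| = h(r). The Delta-condition bounds this by
   1 - eps, i.e. h(r) <= r^(1-eps) rho^eps. So every annulus with inner radius g(r) satisfying
   r^(1-eps) g(r)^eps < h(r) meets the boundary; g(r) = r^(alpha/eps + 1) and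
   g(r) = r (log 1/r)^(-(beta+1)/eps) qualify for the two gauges. *)

lemma ln_norm_circle_mean:
  fixes b :: complex
  assumes "0 < s" "s < cmod b"
  shows "((\<lambda>t. ln (cmod (b + of_real s * cis t))) has_integral (2*pi*ln (cmod b))) {0..2*pi}"
proof -
  have b0: "b \<noteq> 0" using assms by auto
  \<comment> \<open>\<open>ln |b + w| - ln |b|\<close> is the real part of \<open>f\<close>, holomorphic on the disc and zero at 0.\<close>
  define f where "f w = Ln (1 + w / b)" for w
  have Re_pos: "0 < Re (1 + w / b)" if "cmod w \<le> s" for w
  proof -
    have "cmod (w/b) < 1" using that assms b0 by (simp add: norm_divide divide_less_eq)
    hence "\<bar>Re (w/b)\<bar> < 1" using abs_Re_le_cmod le_less_trans by blast
    thus ?thesis by simp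
  qed
  have "f holomorphic_on cball 0 s"
    unfolding f_def
  proof (intro holomorphic_intros)
    show "1 + z / b \<notin> \<real>\<^sub>\<le>\<^sub>0" if "z \<in> cball 0 s" for z
      using Re_pos[of z] that by (auto simp: complex_nonpos_Reals_iff)
  qed (use b0 in auto)
  hence "((\<lambda>u. f u / u) has_contour_integral 0) (circlepath 0 s)"
    using Cauchy_integral_circlepath_simple[of f 0 s 0] assms by (simp add: f_def)
  hence "((\<lambda>t. f (s * cis t) / (s * cis t) * s * \<i> * cis t) has_integral 0) {0..2*pi}"
    unfolding circlepath_def by (subst (asm) has_contour_integral_part_circlepath_iff) auto
  moreover have "(\<lambda>t. f (s * cis t) / (s * cis t) * s * \<i> * cis t) = (\<lambda>t. \<i> * f (s * cis t))"
    using assms by (simp add: field_simps)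
  ultimately have "((\<lambda>t. \<i> * f (s * cis t)) has_integral 0) {0..2*pi}" by (simp only:)
  hence "((\<lambda>t. Re (f (s * cis t))) has_integral 0) {0..2*pi}"
    using has_integral_Re[where I=0] by (subst (asm) has_integral_mult_right_iff) auto
  moreover have "Re (f (s * cis t)) = ln (cmod (b + of_real s * cis t)) - ln (cmod b)" for t
  proof -
    have "1 + s * cis t / b = (b + s * cis t) / b" using b0 by (simp add: field_simps)
    moreover have "0 < Re (1 + s * cis t / b)"
      using Re_pos[of "s * cis t"] assms by (simp add: norm_mult)
    hence "1 + s * cis t / b \<noteq> 0" by (metis less_irrefl zero_complex.sel(1))
    ultimately show ?thesis unfolding f_def using b0 by (simp add: norm_divide ln_div)
  qed
  ultimately have "((\<lambda>t. ln (cmod (b + of_real s * cis t)) - ln (cmod b)) has_integral 0) {0..2*pi}"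
    by simp
  from has_integral_add[OF this has_integral_const_real[of "ln (cmod b)" 0 "2*pi"]]
  show ?thesis by (simp add: mult.commute)
qed

lemma superharmonic_on_subset:
  assumes "superharmonic_on G u" "A \<subseteq> G"
  shows "superharmonic_on A u"
  using assms filter_leD[OF at_le[OF assms(2)]] unfolding superharmonic_on_def by blast

lemma superharmonic_on_diff_ln_norm:
  assumes u: "superharmonic_on G u" and a: "a \<notin> G"
  shows "superharmonic_on G (\<lambda>w. u w - (p * ln (cmod (w - a)) + q))"
proof -
  define v where "v w = p * ln (cmod (w - a)) + q" for w
  have v_tendsto: "(v \<longlongrightarrow> v z) (at z within G)" if "z \<in> G" for z
  proof -
    have "isCont v z" unfolding v_def using that a by (intro continuous_intros) auto
    thus ?thesis by (simp add: continuous_at_imp_continuous_at_within continuous_within[symmetric])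
  qed
  have "\<forall>\<^sub>F w in at z within G. u z - v z - e < u w - v w" if "z \<in> G" "0 < e" for z e
  proof -
    have "\<forall>\<^sub>F w in at z within G. u z - e/2 < u w" using u that unfolding superharmonic_on_def by simp
    moreover have "\<forall>\<^sub>F w in at z within G. dist (v w) (v z) < e/2"
      using tendstoD[OF v_tendsto[OF that(1)], of "e/2"] that(2) by simp
    ultimately show ?thesis
      by eventually_elim (unfold dist_real_def, arith)
  qed
  moreover have "(\<lambda>t. u (c + s * cis t) - v (c + s * cis t)) integrable_on {0..2*pi} \<and>
      integral {0..2*pi} (\<lambda>t. u (c + s * cis t) - v (c + s * cis t)) / (2*pi) \<le> u c - v c"
    if s: "0 < s" "cball c s \<subseteq> G" for c s
  proof -
    have "s < cmod (c - a)"
    proof (rule ccontr)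
      assume "\<not> s < cmod (c - a)"
      hence "a \<in> cball c s" by (simp add: dist_norm norm_minus_commute)
      thus False using s a by blast
    qed
    from has_integral_add[OF has_integral_cmul[OF ln_norm_circle_mean[OF s(1) this], of p]
         has_integral_const_real[of q 0 "2*pi"]]
    have v_mean: "((\<lambda>t. v (c + s * cis t)) has_integral (2*pi * v c)) {0..2*pi}"
      by (simp add: v_def algebra_simps)
    have u_int: "(\<lambda>t. u (c + s * cis t)) integrable_on {0..2*pi}"
      and u_mean: "integral {0..2*pi} (\<lambda>t. u (c + s * cis t)) / (2*pi) \<le> u c"
      using u s unfolding superharmonic_on_def by auto
    have "integral {0..2*pi} (\<lambda>t. u (c + s * cis t) - v (c + s * cis t)) =
        integral {0..2*pi} (\<lambda>t. u (c + s * cis t)) - 2*pi * v c"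
      using integral_diff[OF u_int has_integral_integrable[OF v_mean]] integral_unique[OF v_mean]
      by simp
    with u_int v_mean u_mean show ?thesis
      by (auto simp: diff_divide_distrib intro: integrable_diff)
  qed
  ultimately show ?thesis
    using u unfolding superharmonic_on_def v_def by auto
qed

lemma superharmonic_gt_on_ball:
  assumes "open A" "superharmonic_on A W" "z \<in> A" "m < W z"
  shows "\<exists>d>0. ball z d \<subseteq> A \<and> (\<forall>w\<in>ball z d. m < W w)"
proof -
  from assms(2,3) have "\<And>e. 0 < e \<Longrightarrow> \<forall>\<^sub>F w in at z within A. W z - e < W w"
    unfolding superharmonic_on_def by blast
  from this[of "W z - m"] assms(4) have "\<forall>\<^sub>F w in at z within A. m < W w" by simp
  then obtain d1 where d1: "d1 > 0" "\<And>w. w \<in> A \<Longrightarrow> 0 < dist w z \<Longrightarrow> dist w z < d1 \<Longrightarrow> m < W w"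
    by (auto simp: eventually_at)
  obtain d2 where d2: "d2 > 0" "ball z d2 \<subseteq> A"
    using assms(1,3) open_contains_ball by blast
  have "m < W w" if "w \<in> ball z (min d1 d2)" for w
  proof -
    have "w \<in> A" using that d2(2) by auto
    thus ?thesis using that d1(2)[of w] assms(4) by (cases "w = z") (auto simp: dist_commute)
  qed
  thus ?thesis using d1(1) d2 by (intro exI[of _ "min d1 d2"]) auto
qed

lemma integral_gt_if_gt_near:
  fixes f :: "real \<Rightarrow> real"
  assumes int: "f integrable_on {a..b}" and ab: "a < b"
    and ge: "\<And>x. x \<in> {a..b} \<Longrightarrow> m \<le> f x"
    and x0: "x0 \<in> {a..b}" and \<delta>: "0 < \<delta>" and \<eta>: "0 < \<eta>"
    and near: "\<And>x. x \<in> {a..b} \<Longrightarrow> \<bar>x - x0\<bar> < \<delta> \<Longrightarrow> m + \<eta> \<le> f x"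
  shows "(b - a) * m < integral {a..b} f"
proof -
  define d where "d = min (\<delta>/2) ((b - a)/2)"
  define lo where "lo = (if x0 \<le> (a + b)/2 then x0 else x0 - d)"
  have d: "0 < d" "d < \<delta>" "d \<le> (b - a)/2" using \<delta> ab by (auto simp: d_def min_def)
  have I_sub: "{lo..lo+d} \<subseteq> {a..b}" using x0 d by (auto simp: lo_def)
  have I_near: "\<bar>x - x0\<bar> < \<delta>" if "x \<in> {lo..lo+d}" for x
    using that d by (auto simp: lo_def split: if_splits)
  define g where "g x = m + (if x \<in> {lo..lo+d} then \<eta> else 0)" for x
  have "((\<lambda>x. if x \<in> {lo..lo+d} then \<eta> else 0) has_integral (\<eta> * d)) {a..b}"
    using has_integral_restrict[OF I_sub, of "\<lambda>_. \<eta>"] has_integral_const_real[of \<eta> lo "lo+d"] d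
    by (simp add: mult.commute)
  from has_integral_add[OF has_integral_const_real[of m a b] this]
  have g: "(g has_integral ((b - a) * m + \<eta> * d)) {a..b}"
    unfolding g_def using ab by (simp add: mult.commute)
  have "integral {a..b} g \<le> integral {a..b} f"
    using g int ge near I_sub I_near by (intro integral_le) (auto simp: g_def)
  moreover have "0 < \<eta> * d" using \<eta> d by simp
  ultimately show ?thesis using integral_unique[OF g] by simp
qed

lemma superharmonic_le_on_circle:
  assumes A: "open A" "superharmonic_on A W"
    and t: "0 < t" "cball c t \<subseteq> A"
    and ge: "\<And>w. w \<in> A \<Longrightarrow> m \<le> W w" and le: "W c \<le> m"
    and w: "w \<in> sphere c t"
  shows "W w \<le> m"
proof (rule ccontr)
  assume "\<not> W w \<le> m"
  define \<eta> where "\<eta> = (W w - m)/2"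
  have \<eta>: "0 < \<eta>" "m + \<eta> < W w" using \<open>\<not> W w \<le> m\<close> by (auto simp: \<eta>_def field_simps)
  have "w \<in> A" using w t by auto
  then obtain d where d: "d > 0" "\<And>x. x \<in> ball w d \<Longrightarrow> m + \<eta> < W x"
    using superharmonic_gt_on_ball[OF A _ \<eta>(2)] by blast
  define g where "g \<tau> = c + of_real t * cis \<tau>" for \<tau>
  have gA: "g \<tau> \<in> A" for \<tau>
    using t by (auto simp: g_def dist_norm norm_mult)
  have int: "(\<lambda>\<tau>. W (g \<tau>)) integrable_on {0..2*pi}"
    and "integral {0..2*pi} (\<lambda>\<tau>. W (g \<tau>)) / (2*pi) \<le> W c"
    using A(2) t unfolding superharmonic_on_def g_def by blast+
  hence "integral {0..2*pi} (\<lambda>\<tau>. W (g \<tau>)) \<le> 2*pi * W c"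
    by (simp add: divide_le_eq mult.commute)
  also have "\<dots> \<le> 2*pi * m" using le by simp
  finally have mean: "integral {0..2*pi} (\<lambda>\<tau>. W (g \<tau>)) \<le> 2*pi * m" .
  have "w \<in> path_image (circlepath c t)" using w t by simp
  then obtain x where x: "x \<in> {0..1}" "w = c + t * exp (2 * of_real pi * \<i> * of_real x)"
    unfolding path_image_def circlepath by auto
  define \<tau>0 where "\<tau>0 = 2 * pi * x"
  have \<tau>0: "\<tau>0 \<in> {0..2*pi}" "g \<tau>0 = w"
    using x by (auto simp: \<tau>0_def g_def cis_conv_exp mult_ac)
  have "continuous (at \<tau>0) g" unfolding g_def cis_conv_exp by (intro continuous_intros)
  then obtain \<delta> where \<delta>: "\<delta> > 0" "\<And>\<tau>. dist \<tau> \<tau>0 < \<delta> \<Longrightarrow> dist (g \<tau>) w < d"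
    using d(1) \<tau>0(2) unfolding continuous_at_eps_delta by blast
  have "(2*pi - 0) * m < integral {0..2*pi} (\<lambda>\<tau>. W (g \<tau>))"
  proof (rule integral_gt_if_gt_near[OF int _ _ \<tau>0(1) \<delta>(1) \<eta>(1)])
    show "m + \<eta> \<le> W (g \<tau>)" if "\<bar>\<tau> - \<tau>0\<bar> < \<delta>" for \<tau>
      using d(2)[of "g \<tau>"] \<delta>(2)[of \<tau>] that by (simp add: dist_real_def dist_commute)
  qed (use ge gA in auto)
  with mean show False by simp
qed

lemma superharmonic_attains_Inf:
  assumes A: "open A" "bounded A" "A \<noteq> {}" and W: "superharmonic_on A W"
    and bdd: "bdd_below (W ` A)" and neg: "Inf (W ` A) < 0"
    and bdry: "\<And>\<zeta> e. \<zeta> \<in> frontier A \<Longrightarrow> 0 < e \<Longrightarrow> \<forall>\<^sub>F w in at \<zeta> within A. -e < W w"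
  shows "\<exists>p\<in>A. W p = Inf (W ` A)"
proof (rule ccontr)
  assume not_attained: "\<not> (\<exists>p\<in>A. W p = Inf (W ` A))"
  define m where "m = Inf (W ` A)"
  have m_le: "m \<le> W w" if "w \<in> A" for w
    unfolding m_def using bdd that by (simp add: cInf_lower)
  have gap_near: "\<exists>\<eta>>0. \<exists>d>0. \<forall>w\<in>A. dist w l < d \<longrightarrow> m + \<eta> \<le> W w" if "l \<in> closure A" for l
  proof (cases "l \<in> A")
    case True
    hence "m < W l" using m_le not_attained by (force simp: m_def)
    then obtain d where "d > 0" "\<forall>w\<in>ball l d. (m + W l)/2 < W w"
      using superharmonic_gt_on_ball[OF A(1) W True, of "(m + W l)/2"] by auto
    thus ?thesis using \<open>m < W l\<close>
      by - (rule exI[of _ "(W l - m)/2"], intro conjI exI[of _ d] ballI impI,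
        auto simp: dist_commute field_simps less_imp_le)
  next
    case False
    hence "l \<in> frontier A" using that A(1) by (simp add: frontier_def interior_open)
    from bdry[OF this, of "-m/2"] neg
    obtain d where d: "d > 0" "\<And>w. w \<in> A \<Longrightarrow> 0 < dist w l \<Longrightarrow> dist w l < d \<Longrightarrow> m/2 < W w"
      by (auto simp: eventually_at m_def)
    have "m/2 < W w" if "w \<in> A" "dist w l < d" for w
      using d(2)[OF that(1) _ that(2)] that(1) False by auto
    thus ?thesis using d(1) neg unfolding m_def[symmetric]
      by - (rule exI[of _ "-m/2"], intro conjI exI[of _ d] ballI impI, auto intro: less_imp_le)
  qed
  have "\<exists>x\<in>A. W x < m + inverse (real (Suc n))" for n
    using cInf_lessD[of "W ` A" "m + inverse (real (Suc n))"] A(3) by (auto simp: m_def)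
  then obtain x where x: "\<And>n. x n \<in> A" "\<And>n. W (x n) < m + inverse (real (Suc n))"
    by metis
  have "(\<lambda>n. W (x n)) \<longlonglongrightarrow> m"
  proof (rule tendsto_sandwich[OF _ _ tendsto_const LIMSEQ_inverse_real_of_nat_add])
    show "\<forall>\<^sub>F n in sequentially. m \<le> W (x n)" using m_le x(1) by simp
    show "\<forall>\<^sub>F n in sequentially. W (x n) \<le> m + inverse (real (Suc n))"
      using x(2) by (simp add: less_imp_le)
  qed
  obtain l \<sigma> where l: "l \<in> closure A" "strict_mono \<sigma>" "(x \<circ> \<sigma>) \<longlonglongrightarrow> l"
    using compact_closure[of A] A(2) closure_subset x(1)
    by (metis compact_imp_seq_compact seq_compactE subsetD)
  obtain \<eta> d where \<eta>: "\<eta> > 0" "d > 0" "\<And>w. w \<in> A \<Longrightarrow> dist w l < d \<Longrightarrow> m + \<eta> \<le> W w"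
    using gap_near[OF l(1)] by blast
  have "((\<lambda>n. W (x n)) \<circ> \<sigma>) \<longlonglongrightarrow> m"
    using LIMSEQ_subseq_LIMSEQ[OF \<open>(\<lambda>n. W (x n)) \<longlonglongrightarrow> m\<close> l(2)] .
  moreover have "\<forall>\<^sub>F n in sequentially. m + \<eta> \<le> ((\<lambda>n. W (x n)) \<circ> \<sigma>) n"
    using tendstoD[OF l(3) \<eta>(2)] by eventually_elim (simp add: \<eta>(3) x(1))
  ultimately have "m + \<eta> \<le> m" by (rule tendsto_lowerbound) simp
  with \<eta>(1) show False by simp
qed

lemma superharmonic_min_principle:
  assumes A: "open A" "connected A" "bounded A" and W: "superharmonic_on A W"
    and bdd: "\<And>w. w \<in> A \<Longrightarrow> B \<le> W w"
    and bdry: "\<And>\<zeta> e. \<zeta> \<in> frontier A \<Longrightarrow> 0 < e \<Longrightarrow> \<forall>\<^sub>F w in at \<zeta> within A. -e < W w"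
    and z: "z \<in> A"
  shows "0 \<le> W z"
proof (rule ccontr)
  assume "\<not> 0 \<le> W z"
  define m where "m = Inf (W ` A)"
  have bb: "bdd_below (W ` A)" using bdd unfolding bdd_below_def by blast
  have m_le: "m \<le> W w" if "w \<in> A" for w
    unfolding m_def using bb that by (simp add: cInf_lower)
  have neg: "m < 0" using m_le[OF z] \<open>\<not> 0 \<le> W z\<close> by simp
  obtain p where p: "p \<in> A" "W p = m"
    using superharmonic_attains_Inf[OF A(1,3) _ W bb _ bdry] z neg by (auto simp: m_def)
  define S where "S = {w\<in>A. W w \<le> m}"
  have "open S"
    unfolding open_contains_ball
  proof
    fix c assume "c \<in> S"
    then obtain s where s: "s > 0" "cball c s \<subseteq> A" "W c \<le> m"
      using A(1) open_contains_cball by (force simp: S_def)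
    have "ball c s \<subseteq> S"
      using superharmonic_le_on_circle[OF A(1) W _ _ m_le s(3), of "dist c w" w for w] s
      by (fastforce simp: S_def)
    thus "\<exists>e>0. ball c e \<subseteq> S" using s by blast
  qed
  moreover have "open (A - S)"
    unfolding open_contains_ball
  proof
    fix q assume "q \<in> A - S"
    then obtain d where "d > 0" "ball q d \<subseteq> A" "\<forall>w\<in>ball q d. m < W w"
      using superharmonic_gt_on_ball[OF A(1) W, of q m] by (auto simp: S_def)
    thus "\<exists>e>0. ball q e \<subseteq> A - S" by (intro exI[of _ d]) (auto simp: S_def)
  qed
  ultimately have "S \<inter> A = {} \<or> (A - S) \<inter> A = {}"
    by (intro connectedD[OF A(2)]) (auto simp: S_def)
  with p have le_m: "\<And>w. w \<in> A \<Longrightarrow> W w \<le> m" by (auto simp: S_def)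
  obtain \<zeta> where \<zeta>: "\<zeta> \<in> frontier A"
    using frontier_not_empty[of A] A(3) not_bounded_UNIV z by blast
  from bdry[OF \<zeta>, of "-m/2"] neg
  obtain d where d: "d > 0" "\<And>w. w \<in> A \<Longrightarrow> 0 < dist w \<zeta> \<Longrightarrow> dist w \<zeta> < d \<Longrightarrow> m/2 < W w"
    by (auto simp: eventually_at)
  have "\<zeta> islimpt A"
    using \<zeta> A(1) by (auto simp: frontier_def interior_open closure_def)
  then obtain w where "w \<in> A" "w \<noteq> \<zeta>" "dist w \<zeta> < d"
    using d(1) islimpt_approachable by blast
  with d(2) le_m neg show False by force
qed

definition perron_upper :: "complex set \<Rightarrow> complex set \<Rightarrow> (complex \<Rightarrow> real) \<Rightarrow> bool" where
  "perron_upper G E u \<longleftrightarrow> superharmonic_on G u \<and> (\<forall>w. 0 \<le> u w \<and> u w \<le> 1) \<and>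
     (\<forall>\<zeta>\<in>frontier G. \<forall>e>0. \<forall>\<^sub>F w in at \<zeta> within G. indicator E \<zeta> - e \<le> u w)"

lemma harmonic_measure_ge:
  assumes "\<And>u. perron_upper G E u \<Longrightarrow> c \<le> u z"
  shows "c \<le> harmonic_measure G E z"
proof -
  have "perron_upper G E (\<lambda>_. 1)"
    unfolding perron_upper_def superharmonic_on_def by (auto simp: indicator_def)
  thus ?thesis
    unfolding harmonic_measure_def using assms unfolding perron_upper_def
    by (intro cInf_greatest) blast+
qed

lemma perron_upper_ge_near_sphere:
  assumes u: "perron_upper (\<Omega> \<inter> ball a r) (\<Omega> \<inter> sphere a r) u"
    and \<zeta>: "\<zeta> \<in> \<Omega> \<inter> sphere a r" "\<zeta> \<in> closure (\<Omega> \<inter> ball a r)" and e: "0 < e"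
  shows "\<forall>\<^sub>F w in at \<zeta> within \<Omega> \<inter> ball a r. 1 - e \<le> u w"
proof -
  have "\<zeta> \<notin> interior (\<Omega> \<inter> ball a r)" using \<zeta>(1) interior_subset by fastforce
  with \<zeta> have "\<zeta> \<in> frontier (\<Omega> \<inter> ball a r)" by (simp add: frontier_def)
  with u e \<zeta>(1) show ?thesis unfolding perron_upper_def by auto
qed

lemma frontier_annulus_subset:
  fixes a :: "'a::real_normed_vector"
  shows "frontier (ball a r - cball a \<rho>) \<subseteq> sphere a \<rho> \<union> sphere a r"
proof -
  have "closure (ball a r - cball a \<rho>) \<subseteq> cball a r - ball a \<rho>"
    by (rule closure_minimal) auto
  moreover have "interior (ball a r - cball a \<rho>) = ball a r - cball a \<rho>"
    by (rule interior_open) auto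
  ultimately show ?thesis by (auto simp: frontier_def)
qed

lemma ln_ratio_le_perron_upper:
  assumes \<rho>: "0 < \<rho>" "\<rho> < r" and annulus: "cball a r - cball a \<rho> \<subseteq> \<Omega>"
    and u: "perron_upper (\<Omega> \<inter> ball a r) (\<Omega> \<inter> sphere a r) u"
    and z: "z \<in> ball a r - cball a \<rho>"
  shows "ln (dist z a / \<rho>) / ln (r / \<rho>) \<le> u z"
proof -
  define A where "A = ball a r - cball a \<rho>"
  define L where "L = ln (r / \<rho>)"
  have L: "0 < L" using \<rho> by (simp add: L_def)
  \<comment> \<open>The harmonic function \<open>ln (|w - a|/\<rho>) / L\<close>, vanishing on the inner and equal to 1 on the
    outer circle, written in the shape required by superharmonic_on_diff_ln_norm.\<close>
  define v where "v w = 1/L * ln (cmod (w - a)) + - ln \<rho> / L" for w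
  have v_eq: "v w = ln (dist w a / \<rho>) / L" if "w \<noteq> a" for w
    using that \<rho> by (simp add: v_def ln_div dist_norm diff_divide_distrib)
  have v_near: "\<forall>\<^sub>F w in at \<zeta> within A. dist (v w) (v \<zeta>) < e" if "\<zeta> \<noteq> a" "0 < e" for \<zeta> e
  proof -
    have "isCont v \<zeta>" unfolding v_def using that by (intro continuous_intros) auto
    thus ?thesis
      using tendstoD[of v "v \<zeta>" "at \<zeta> within A"] that(2)
      by (simp add: continuous_at_imp_continuous_at_within continuous_within[symmetric])
  qed
  have AG: "A \<subseteq> \<Omega> \<inter> ball a r" using annulus by (auto simp: A_def)
  have aA: "a \<notin> A" using \<rho> by (simp add: A_def)
  have u01: "\<And>w. 0 \<le> u w \<and> u w \<le> 1" using u by (simp add: perron_upper_def)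
  have "0 \<le> u z - v z"
  proof (rule superharmonic_min_principle)
    show "open A" "bounded A" by (auto simp: A_def)
    have "A = {w. \<rho> < norm (w - a) \<and> norm (w - a) < r}"
      by (auto simp: A_def dist_norm norm_minus_commute)
    thus "connected A" by (simp add: connected_annulus)
    show "superharmonic_on A (\<lambda>w. u w - v w)"
      using superharmonic_on_subset[OF _ AG] u aA unfolding perron_upper_def v_def
      by (blast intro: superharmonic_on_diff_ln_norm)
    show "-1 \<le> u w - v w" if "w \<in> A" for w
    proof -
      have "dist w a \<le> r" "0 < dist w a" using that \<rho> by (auto simp: A_def dist_commute)
      hence "v w \<le> 1" using that aA \<rho> L v_eq[of w] by (auto simp: L_def divide_le_eq_1 divide_right_mono)
      thus ?thesis using u01[of w] by simp
    qed
    show "z \<in> A" using z by (simp add: A_def)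
  next
    fix \<zeta> and e :: real assume \<zeta>: "\<zeta> \<in> frontier A" and e: "0 < e"
    hence "\<zeta> \<in> sphere a \<rho> \<union> sphere a r" using frontier_annulus_subset unfolding A_def by blast
    thus "\<forall>\<^sub>F w in at \<zeta> within A. - e < u w - v w"
    proof
      assume "\<zeta> \<in> sphere a \<rho>"
      hence "\<zeta> \<noteq> a" "v \<zeta> = 0" using \<rho> v_eq[of \<zeta>] by (auto simp: dist_commute)
      from v_near[OF \<open>\<zeta> \<noteq> a\<close> e] show ?thesis
      proof eventually_elim
        case (elim w) thus ?case using u01[of w] \<open>v \<zeta> = 0\<close> by (auto simp: dist_real_def)
      qed
    next
      assume r: "\<zeta> \<in> sphere a r"
      hence "\<zeta> \<noteq> a" using \<rho> by auto
      hence "v \<zeta> = 1" using r L v_eq[of \<zeta>] by (simp add: dist_commute L_def)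
      have "\<zeta> \<in> \<Omega>" using r annulus \<rho> by auto
      moreover have "\<zeta> \<in> closure (\<Omega> \<inter> ball a r)" using \<zeta> closure_mono[OF AG] by (auto simp: frontier_def)
      ultimately have "\<forall>\<^sub>F w in at \<zeta> within A. 1 - e/2 \<le> u w"
        using perron_upper_ge_near_sphere[OF u _ _ half_gt_zero[OF e]] r filter_leD[OF at_le[OF AG]]
        by blast
      moreover have "\<forall>\<^sub>F w in at \<zeta> within A. dist (v w) (v \<zeta>) < e/2"
        using v_near[OF \<open>\<zeta> \<noteq> a\<close>, of "e/2"] e by simp
      ultimately show ?thesis
        by eventually_elim (use \<open>v \<zeta> = 1\<close> in \<open>unfold dist_real_def, arith\<close>)
    qed
  qed
  moreover have "z \<noteq> a" using z \<rho> by auto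
  ultimately show ?thesis using v_eq[of z] by (simp add: L_def)
qed

lemma w_ar_ge_ln_ratio:
  assumes "0 < \<rho>" "\<rho> < r" "cball a r - cball a \<rho> \<subseteq> \<Omega>" "z \<in> ball a r - cball a \<rho>"
  shows "ln (dist z a / \<rho>) / ln (r / \<rho>) \<le> w_ar \<Omega> a r z"
  unfolding w_ar_def using ln_ratio_le_perron_upper[OF assms(1-3) _ assms(4)]
  by (rule harmonic_measure_ge)

lemma sphere_subset_closure_annulus:
  fixes a :: "'a::real_normed_vector"
  assumes "0 < r" "\<rho> < r"
  shows "sphere a r \<subseteq> closure (ball a r - cball a \<rho>)"
proof -
  have "- cball a \<rho> \<inter> closure (ball a r) \<subseteq> closure (- cball a \<rho> \<inter> ball a r)"
    by (rule open_Int_closure_subset) auto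
  moreover have "ball a r - cball a \<rho> = - cball a \<rho> \<inter> ball a r" by blast
  ultimately show ?thesis using assms by auto
qed

lemma annulus_subset_if_frontier_avoids:
  fixes \<Omega> :: "complex set"
  assumes \<Omega>: "open \<Omega>" "connected \<Omega>" and a: "a \<in> frontier \<Omega>" and far: "\<not> \<Omega> \<subseteq> cball a r"
    and \<rho>: "0 < \<rho>" "\<rho> < r"
    and avoid: "frontier \<Omega> \<inter> (cball a r - ball a \<rho>) = {}"
  shows "cball a r - cball a \<rho> \<subseteq> \<Omega>"
proof -
  define A where "A = ball a r - cball a \<rho>"
  have frontier_eq: "frontier \<Omega> = closure \<Omega> - \<Omega>"
    using \<Omega>(1) by (simp add: frontier_def interior_open)
  have "A = {w. \<rho> < norm (w - a) \<and> norm (w - a) < r}"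
    by (auto simp: A_def dist_norm norm_minus_commute)
  hence "connected A" by (simp add: connected_annulus)
  moreover have "A \<subseteq> \<Omega> \<union> - closure \<Omega>"
    using avoid frontier_eq by (auto simp: A_def)
  ultimately have "\<Omega> \<inter> A = {} \<or> - closure \<Omega> \<inter> A = {}"
    using connectedD[of A \<Omega> "- closure \<Omega>"] \<Omega>(1) closure_subset by blast
  moreover have "\<Omega> \<inter> A \<noteq> {}"
  proof
    assume disjoint: "\<Omega> \<inter> A = {}"
    define s where "s = (\<rho> + r)/2"
    have s: "\<rho> < s" "s < r" using \<rho> by (auto simp: s_def)
    have "\<Omega> \<subseteq> ball a s \<union> - cball a s"
      using disjoint s by (force simp: A_def)
    hence "ball a s \<inter> \<Omega> = {} \<or> - cball a s \<inter> \<Omega> = {}"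
      by (intro connectedD[OF \<Omega>(2)]) auto
    moreover obtain x where "x \<in> \<Omega>" "dist a x < s"
      using a s \<rho> unfolding frontier_straddle by (meson less_trans)
    ultimately have "\<Omega> \<subseteq> cball a s" by auto
    with far s show False by auto
  qed
  ultimately have "A \<subseteq> closure \<Omega>" by auto
  hence A_sub: "A \<subseteq> \<Omega>" using avoid frontier_eq by (auto simp: A_def)
  have "sphere a r \<subseteq> closure \<Omega>"
    using sphere_subset_closure_annulus[of r \<rho> a] closure_mono[OF A_sub] \<rho> by (auto simp: A_def)
  hence "sphere a r \<subseteq> \<Omega>" using avoid frontier_eq \<rho> by auto
  moreover have "cball a r - cball a \<rho> \<subseteq> A \<union> sphere a r" by (auto simp: A_def less_le)
  ultimately show ?thesis using A_sub by blast
qed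

lemma frontier_meets_annulus:
  fixes \<Omega> :: "complex set"
  assumes \<Omega>: "open \<Omega>" "connected \<Omega>" and a: "a \<in> frontier \<Omega>" and far: "\<not> \<Omega> \<subseteq> cball a r"
    and \<rho>: "0 < \<rho>" "\<rho> \<le> r" and hr: "hr < r" and \<epsilon>: "\<epsilon> \<le> 1"
    and small: "\<And>z. z \<in> \<Omega> \<inter> sphere a hr \<Longrightarrow> w_ar \<Omega> a r z \<le> 1 - \<epsilon>"
    and big: "r powr (1 - \<epsilon>) * \<rho> powr \<epsilon> < hr"
  shows "frontier \<Omega> \<inter> (cball a r - ball a \<rho>) \<noteq> {}"
proof
  assume avoid: "frontier \<Omega> \<inter> (cball a r - ball a \<rho>) = {}"
  have "\<rho> = \<rho> powr (1 - \<epsilon>) * \<rho> powr \<epsilon>"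
    using \<rho>(1) by (simp flip: powr_add)
  also have "\<dots> \<le> r powr (1 - \<epsilon>) * \<rho> powr \<epsilon>"
    using \<rho> \<epsilon> by (intro mult_right_mono powr_mono2) auto
  finally have "\<rho> < hr" using big by linarith
  define z where "z = a + of_real hr"
  have z: "dist z a = hr" "z \<in> ball a r - cball a \<rho>"
    using \<open>\<rho> < hr\<close> hr \<rho> by (auto simp: z_def dist_norm)
  have "cball a r - cball a \<rho> \<subseteq> \<Omega>"
    using annulus_subset_if_frontier_avoids[OF \<Omega> a far \<rho>(1) _ avoid] \<open>\<rho> < hr\<close> hr by simp
  with z have "z \<in> \<Omega> \<inter> sphere a hr" by (auto simp: dist_commute)
  with w_ar_ge_ln_ratio[of \<rho> r a \<Omega> z] small[of z] z \<rho>(1) \<open>\<rho> < hr\<close> hr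
    \<open>cball a r - cball a \<rho> \<subseteq> \<Omega>\<close>
  have "ln (hr / \<rho>) / ln (r / \<rho>) \<le> 1 - \<epsilon>" by auto
  hence "ln (hr / \<rho>) \<le> ln ((r / \<rho>) powr (1 - \<epsilon>))"
    using \<rho>(1) \<open>\<rho> < hr\<close> hr by (simp add: divide_le_eq ln_powr mult.commute)
  hence "hr / \<rho> \<le> (r / \<rho>) powr (1 - \<epsilon>)"
    using \<rho>(1) \<open>\<rho> < hr\<close> hr by (subst (asm) ln_le_cancel_iff) auto
  also have "\<dots> = r powr (1 - \<epsilon>) * \<rho> powr \<epsilon> / \<rho>"
    using \<rho>(1) hr by (simp add: powr_divide powr_diff field_simps)
  finally show False using big \<rho>(1) by (simp add: divide_le_eq)
qed

lemma unif_perfect_frontier_if_small_harmonic_measure: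
  fixes \<Omega> :: "complex set" and g h :: "real \<Rightarrow> real"
  assumes \<Omega>: "open \<Omega>" "connected \<Omega>" "\<Omega> \<noteq> {}" and \<epsilon>: "\<epsilon> \<le> 1" and r0: "0 < r0"
    and small: "\<And>a r z. a \<in> frontier \<Omega> \<Longrightarrow> 0 < r \<Longrightarrow> r < r0 \<Longrightarrow> z \<in> \<Omega> \<inter> sphere a (h r) \<Longrightarrow>
        w_ar \<Omega> a r z \<le> 1 - \<epsilon>"
    and g: "0 < r1" "mono_on {0..<r1} g" "\<And>r. r \<in> {0..<r1} \<Longrightarrow> g r \<le> r"
    and gh: "\<And>r. 0 < r \<Longrightarrow> r < r1 \<Longrightarrow> 0 < g r \<and> h r < r \<and> r powr (1 - \<epsilon>) * g r powr \<epsilon> < h r"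
  shows "\<exists>r2>0. unif_perfect g r2 (frontier \<Omega>)"
proof -
  obtain p \<delta> where \<delta>: "0 < \<delta>" "ball p \<delta> \<subseteq> \<Omega>"
    using \<Omega>(1,3) open_contains_ball by blast
  define r2 where "r2 = min r1 (min r0 \<delta>)"
  have "\<exists>z\<in>frontier \<Omega>. g r \<le> dist z a \<and> dist z a \<le> r"
    if a: "a \<in> frontier \<Omega>" and r: "0 < r" "r < r2" for a r
  proof -
    have "\<not> \<Omega> \<subseteq> cball a r"
    proof
      assume "\<Omega> \<subseteq> cball a r"
      with \<delta>(2) have "ball p \<delta> \<subseteq> cball a r" by blast
      hence "dist p a + \<delta> \<le> r" using \<delta>(1) by (auto simp: ball_subset_cball_iff)
      hence "\<delta> \<le> r" using zero_le_dist[of p a] by linarith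
      with r show False by (simp add: r2_def)
    qed
    from frontier_meets_annulus[OF \<Omega>(1,2) a this _ _ _ \<epsilon> small[OF a r(1)]] gh[of r] g(3)[of r] r
    show ?thesis by (fastforce simp: r2_def dist_commute)
  qed
  moreover have "mono_on {0..<r2} g" using g(2) by (rule mono_on_subset) (auto simp: r2_def)
  ultimately have "unif_perfect g r2 (frontier \<Omega>)"
    using g(3) by (auto simp: unif_perfect_def r2_def)
  moreover have "0 < r2" using g(1) r0 \<delta>(1) by (simp add: r2_def)
  ultimately show ?thesis by blast
qed

lemma h1_mono_on: "0 \<le> \<alpha> \<Longrightarrow> mono_on {0..} (h1 \<alpha>)"
  by (intro mono_onI) (simp add: h1_def powr_mono2)

lemma h1_le: "1 \<le> \<alpha> \<Longrightarrow> t \<in> {0..1} \<Longrightarrow> h1 \<alpha> t \<le> t"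
  using powr_mono'[of 1 \<alpha> t] by (auto simp: h1_def)

lemma h2_mono_on:
  assumes "0 \<le> \<beta>"
  shows "mono_on {0..<1} (h2 \<beta>)"
proof (rule mono_onI)
  fix s t :: real assume s: "s \<in> {0..<1}" and t: "t \<in> {0..<1}" and "s \<le> t"
  show "h2 \<beta> s \<le> h2 \<beta> t"
  proof (cases "s = 0")
    case False
    hence "0 < s" "0 < ln (1 / t)" using s t \<open>s \<le> t\<close> by (auto simp: ln_div)
    moreover have "ln (1 / t) \<le> ln (1 / s)" using \<open>0 < s\<close> \<open>s \<le> t\<close> by (simp add: ln_div)
    ultimately have "ln (1 / s) powr (- \<beta>) \<le> ln (1 / t) powr (- \<beta>)"
      using assms by (intro powr_mono2') auto
    with \<open>0 < s\<close> \<open>s \<le> t\<close> show ?thesis by (simp add: h2_def mult_mono)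
  qed (use t in \<open>simp add: h2_def\<close>)
qed

lemma h2_le:
  assumes "0 \<le> \<beta>" "0 \<le> t" "t \<le> exp (- 1)"
  shows "h2 \<beta> t \<le> t"
proof (cases "t = 0")
  case False
  hence "0 < t" using assms(2) by simp
  hence "ln t \<le> - 1" using assms(3) ln_le_cancel_iff[of t "exp (- 1)"] by simp
  hence "1 \<le> ln (1 / t)" using \<open>0 < t\<close> by (simp add: ln_div)
  hence "ln (1 / t) powr (- \<beta>) \<le> 1"
    using assms(1) by (simp add: powr_minus inverse_le_1_iff ge_one_powr_ge_zero)
  thus ?thesis using assms(2) by (simp add: h2_def mult_left_le)
qed (simp add: h2_def)

lemma U1_frontier_if_Delta1:
  fixes \<Omega> :: "complex set"
  assumes \<Omega>: "open \<Omega>" "connected \<Omega>" "\<Omega> \<noteq> {}" and \<alpha>: "1 < \<alpha>" and "Delta1 \<alpha> \<Omega>"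
  shows "\<exists>\<alpha>'>\<alpha>. U1 \<alpha>' (frontier \<Omega>)"
proof -
  obtain C \<epsilon> r0 where C: "0 < C" and \<epsilon>: "0 < \<epsilon>" "\<epsilon> < 1" and r0: "0 < r0"
    and small: "\<And>a r z. a \<in> frontier \<Omega> \<Longrightarrow> 0 < r \<Longrightarrow> r < r0 \<Longrightarrow>
      z \<in> \<Omega> \<inter> sphere a (C * h1 \<alpha> r) \<Longrightarrow> w_ar \<Omega> a r z \<le> 1 - \<epsilon>"
    using assms(5) unfolding Delta1_def Delta_cond_def by metis
  define \<alpha>' where "\<alpha>' = \<alpha> / \<epsilon> + 1"
  have \<alpha>'\<epsilon>: "\<alpha>' * \<epsilon> = \<alpha> + \<epsilon>" using \<epsilon> by (simp add: \<alpha>'_def field_simps)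
  have "\<alpha> \<le> \<alpha> / \<epsilon>" using \<epsilon> \<alpha> by (simp add: le_divide_eq)
  hence "\<alpha> < \<alpha>'" by (simp add: \<alpha>'_def)
  define r1 where "r1 = min 1 (min C (C powr (- 1 / (\<alpha> - 1))))"
  have "\<exists>r2>0. unif_perfect (\<lambda>t. 1 * h1 \<alpha>' t) r2 (frontier \<Omega>)"
  proof (rule unif_perfect_frontier_if_small_harmonic_measure[OF \<Omega> _ r0 small])
    show "0 < r1" using C by (simp add: r1_def)
    have "mono_on {0..<r1} (h1 \<alpha>')"
      by (rule mono_on_subset[OF h1_mono_on]) (use \<open>\<alpha> < \<alpha>'\<close> \<alpha> in auto)
    thus "mono_on {0..<r1} (\<lambda>t. 1 * h1 \<alpha>' t)" by simp
    show "1 * h1 \<alpha>' r \<le> r" if "r \<in> {0..<r1}" for r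
      using h1_le[of \<alpha>' r] that \<open>\<alpha> < \<alpha>'\<close> \<alpha> by (simp add: r1_def)
    fix r assume r: "0 < r" "r < r1"
    have "r powr (\<alpha> - 1) < (C powr (- 1 / (\<alpha> - 1))) powr (\<alpha> - 1)"
      using r \<alpha> by (intro powr_less_mono2) (auto simp: r1_def)
    also have "\<dots> = C powr (-1)"
      using \<alpha> by (simp add: powr_powr)
    finally have "C * r powr (\<alpha> - 1) < 1"
      using C by (simp add: powr_minus field_simps)
    hence "C * r powr \<alpha> < r"
      using r by (simp add: powr_diff field_simps)
    moreover have "r powr (1 - \<epsilon>) * (r powr \<alpha>') powr \<epsilon> = r * r powr \<alpha>"
    proof -
      have "r powr (1 - \<epsilon>) * (r powr \<alpha>') powr \<epsilon> = r powr ((1 - \<epsilon>) + \<alpha>' * \<epsilon>)"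
        by (simp add: powr_powr powr_add)
      also have "\<dots> = r * r powr \<alpha>"
        using \<alpha>'\<epsilon> r by (simp add: powr_add)
      finally show ?thesis .
    qed
    moreover have "r * r powr \<alpha> < C * r powr \<alpha>" using r by (simp add: r1_def)
    ultimately show "0 < 1 * h1 \<alpha>' r \<and> C * h1 \<alpha> r < r \<and>
        r powr (1 - \<epsilon>) * (1 * h1 \<alpha>' r) powr \<epsilon> < C * h1 \<alpha> r"
      using r by (simp add: h1_def)
  qed (use \<epsilon> in simp)
  thus ?thesis using \<open>\<alpha> < \<alpha>'\<close> unfolding U1_def by (meson zero_less_one)
qed

lemma U2_frontier_if_Delta2:
  fixes \<Omega> :: "complex set"
  assumes \<Omega>: "open \<Omega>" "connected \<Omega>" "\<Omega> \<noteq> {}" and \<beta>: "0 < \<beta>" and "Delta2 \<beta> \<Omega>"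
  shows "\<exists>\<beta>'>\<beta>. U2 \<beta>' (frontier \<Omega>)"
proof -
  obtain C \<epsilon> r0 where C: "0 < C" and \<epsilon>: "0 < \<epsilon>" "\<epsilon> < 1" and r0: "0 < r0"
    and small: "\<And>a r z. a \<in> frontier \<Omega> \<Longrightarrow> 0 < r \<Longrightarrow> r < r0 \<Longrightarrow>
      z \<in> \<Omega> \<inter> sphere a (C * h2 \<beta> r) \<Longrightarrow> w_ar \<Omega> a r z \<le> 1 - \<epsilon>"
    using assms(5) unfolding Delta2_def Delta_cond_def by metis
  define \<beta>' where "\<beta>' = (\<beta> + 1) / \<epsilon>"
  have \<beta>'\<epsilon>: "\<beta>' * \<epsilon> = \<beta> + 1" using \<epsilon> by (simp add: \<beta>'_def)
  have "\<beta> + 1 \<le> \<beta>'" using \<epsilon> \<beta> by (simp add: \<beta>'_def le_divide_eq)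
  hence "\<beta> < \<beta>'" by simp
  define K where "K = max 1 (max (1 / C) (C powr (1 / \<beta>)))"
  define r1 where "r1 = exp (- K)"
  have K_lt: "K < ln (1 / r)" if "0 < r" "r < r1" for r
    using that ln_less_cancel_iff[of r r1] by (simp add: r1_def ln_div)
  have "\<exists>r2>0. unif_perfect (\<lambda>t. 1 * h2 \<beta>' t) r2 (frontier \<Omega>)"
  proof (rule unif_perfect_frontier_if_small_harmonic_measure[OF \<Omega> _ r0 small])
    show "0 < r1" by (simp add: r1_def)
    have "r1 \<le> exp (- 1)" "r1 < 1" by (simp_all add: r1_def K_def)
    hence "mono_on {0..<r1} (h2 \<beta>')"
      by (intro mono_on_subset[OF h2_mono_on]) (use \<open>\<beta> < \<beta>'\<close> \<beta> in auto)
    thus "mono_on {0..<r1} (\<lambda>t. 1 * h2 \<beta>' t)" by simp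
    show "1 * h2 \<beta>' r \<le> r" if "r \<in> {0..<r1}" for r
      using h2_le[of \<beta>' r] that \<open>r1 \<le> exp (- 1)\<close> \<open>\<beta> < \<beta>'\<close> \<beta> by simp
    fix r assume r: "0 < r" "r < r1"
    define y where "y = ln (1 / r)"
    have y: "1 < y" "1 / C < y" "C powr (1 / \<beta>) < y"
      using K_lt[OF r] by (auto simp: K_def y_def)
    have "C < y powr \<beta>"
      using powr_less_mono2[OF \<beta> _ y(3)] C \<beta> by (simp add: powr_powr)
    hence "C * y powr (- \<beta>) < 1"
      using y by (simp add: powr_minus field_simps)
    hence "C * (r * y powr (- \<beta>)) < r" using r by simp
    moreover have "r powr (1 - \<epsilon>) * (r * y powr (- \<beta>')) powr \<epsilon> = r * y powr (- \<beta>) / y"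
    proof -
      have "(r * y powr (- \<beta>')) powr \<epsilon> = r powr \<epsilon> * y powr (- (\<beta>' * \<epsilon>))"
        using r y by (simp add: powr_mult powr_powr)
      moreover have "r powr (1 - \<epsilon>) * r powr \<epsilon> = r" using r by (simp flip: powr_add)
      moreover have "y powr (- (\<beta>' * \<epsilon>)) = y powr (- \<beta> - 1)" using \<beta>'\<epsilon> by simp
      moreover have "y powr (- \<beta> - 1) = y powr (- \<beta>) / y" using y by (simp add: powr_diff)
      ultimately show ?thesis by (metis mult.assoc times_divide_eq_right)
    qed
    moreover have "r * y powr (- \<beta>) / y < C * (r * y powr (- \<beta>))"
      using r y C by (simp add: field_simps)
    ultimately show "0 < 1 * h2 \<beta>' r \<and> C * h2 \<beta> r < r \<and>
        r powr (1 - \<epsilon>) * (1 * h2 \<beta>' r) powr \<epsilon> < C * h2 \<beta> r"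
      using r y by (simp add: h2_def flip: y_def)
  qed (use \<epsilon> in simp)
  thus ?thesis using \<open>\<beta> < \<beta>'\<close> unfolding U2_def by (meson zero_less_one)
qed

theorem proposition4p2:
  fixes \<Omega> :: "complex set"
  assumes "open \<Omega>" and "connected \<Omega>" and "\<Omega> \<noteq> {}"
  shows "(\<forall>\<alpha>>1. Delta1 \<alpha> \<Omega> \<longrightarrow> (\<exists>\<alpha>'>\<alpha>. U1 \<alpha>' (frontier \<Omega>)))
       \<and> (\<forall>\<beta>>0. Delta2 \<beta> \<Omega> \<longrightarrow> (\<exists>\<beta>'>\<beta>. U2 \<beta>' (frontier \<Omega>)))"
  using U1_frontier_if_Delta1[OF assms] U2_frontier_if_Delta2[OF assms] by blast

end
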